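(* Let $0<s_1<s_2<1$, $2s_1<d<\frac{2s_1s_2}{s_2-s_1}$, $a>0$, and suppose $g$ satisfies $(G_1)$–$(G_3)$ and $V$ satisfies $(V_1)$–$(V_3)$. Then $J|_{\mathcal{P}_a}$ is coercive: $$\lim_{\substack{u\in\mathcal{P}_a,\\ |\nabla_{s_1}u|_2^2+|\nabla_{s_2}u|_2^2\to\infty}}J(u)=+\infty.$$
   Context: For $s\in(0,1)$, $|\nabla_s u|_2^2=\int_{\mathbb{R}^d\times\mathbb{R}^d}\frac{|u(x)-u(y)|^2}{|x-y|^{d+2s}}dx\,dy$; $|\cdot|_p$ is the $L^p(\mathbb{R}^d)$ norm; $H^{s_1,s_2}(\mathbb{R}^d)=\{u\in L^2(\mathbb{R}^d):|\nabla_{s_1}u|_2<\infty,\ |\nabla_{s_2}u|_2<\infty\}$. $S_a=\{u\in H^{s_1,s_2}(\mathbb{R}^d):|u|_2^2=a\}$. $g:\mathbb{R}\to\mathbb{R}$, $G(s)=\int_0^sg$, $\widetilde G(s)=\frac12g(s)s-G(s)$. $(G_1)$: $g$ continuous, odd. $(G_2)$: there exist $\alpha,\beta$ with $2+\frac{4s_2}{d}<\alpha<\beta<\frac{2d}{d-2s_1}$ and $\alpha G(s)\le g(s)s\le\beta G(s)$ for all $s$. $(G_3)$: $\widetilde G'$ exists and $\widetilde G'(s)s\ge\alpha\widetilde G(s)$ for all $s$. $(V_1)$: $\lim_{|x|\to\infty}V(x)=\sup V=0$ and there is $\sigma_1\in[0,\frac{d(\alpha-2)-4}{d(\alpha-2)}]$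 with $|\int Vu^2dx|\le\sigma_1(|\nabla_{s_1}u|_2^2+|\nabla_{s_2}u|_2^2)$ for all $u$. $(V_2)$: $\nabla V$ exists a.e.; $W(x)=\frac12\langle\nabla V(x),x\rangle$ satisfies $\lim_{|x|\to\infty}W(x)=0$ and there is $\sigma_2$ with $0<\sigma_2<\min\{s_1-\frac{(\beta-2)d}{2\beta},\frac{d(\alpha-2)(1-\sigma_1)}{4}-s_2\}$ and $|\int Wu^2dx|\le\sigma_2(|\nabla_{s_1}u|_2^2+|\nabla_{s_2}u|_2^2)$ for all $u$. $(V_3)$: $\nabla W$ exists a.e.; $Y(x)=(d\alpha/2-d-1)W(x)+\langle\nabla W(x),x\rangle$ satisfies $|\int Yu^2dx|\le\sigma_3(|\nabla_{s_1}u|_2^2+|\nabla_{s_2}u|_2^2)$ for all $u$, for some $\sigma_3\in[0,s_1^2(d\alpha/2-d-2s_2)]$. (All $u\in H^{s_1,s_2}(\mathbb{R}^d)$.) $J(u)=\frac12|\nabla_{s_1}u|_2^2+\frac12|\nabla_{s_2}u|_2^2+\frac12\int_{\mathbb{R}^d}V(x)u^2dx-\int_{\mathbb{R}^d}G(u)dx$; $P(u)=s_1|\nabla_{s_1}u|_2^2+s_2|\nabla_{s_2}u|_2^2-\frac12\int_{\mathbb{R}^d}\langle\nabla V(x),x\rangle u^2dx-d\int_{\mathbb{R}^d}\widetilde G(u)dx$; $\mathcal{P}_a=\{u\in S_a:P(u)=0\}$. *)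

theory Defs
  imports "HOL-Analysis.Analysis"
begin

text \<open>Dimension d is CARD('n); functions live on real^'n (Euclidean norm).\<close>

text \<open>Squared Gagliardo seminorm |nabla_s u|_2^2 (as an extended nonnegative real).\<close>
definition gag2 :: "real \<Rightarrow> (real^'n \<Rightarrow> real) \<Rightarrow> ennreal" where
  "gag2 s u = (\<integral>\<^sup>+ z. ennreal ((u (fst z) - u (snd z))\<^sup>2
        / norm (fst z - snd z) powr (real CARD('n) + 2 * s)) \<partial>(lborel \<Otimes>\<^sub>M lborel))"

definition L2sq :: "(real^'n \<Rightarrow> real) \<Rightarrow> ennreal" where
  "L2sq u = (\<integral>\<^sup>+ x. ennreal ((u x)\<^sup>2) \<partial>lborel)"

definition Hs :: "real \<Rightarrow> real \<Rightarrow> (real^'n \<Rightarrow> real) set" where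
  "Hs s1 s2 = {u. u \<in> borel_measurable lborel \<and> L2sq u < \<infinity>
                  \<and> gag2 s1 u < \<infinity> \<and> gag2 s2 u < \<infinity>}"

definition Sa :: "real \<Rightarrow> real \<Rightarrow> real \<Rightarrow> (real^'n \<Rightarrow> real) set" where
  "Sa s1 s2 a = {u \<in> Hs s1 s2. L2sq u = ennreal a}"

definition Gprim :: "(real \<Rightarrow> real) \<Rightarrow> real \<Rightarrow> real" where
  "Gprim g s = (LBINT t=0..s. g t)"

definition Gtil :: "(real \<Rightarrow> real) \<Rightarrow> real \<Rightarrow> real" where
  "Gtil g s = g s * s / 2 - Gprim g s"

definition Jfun :: "real \<Rightarrow> real \<Rightarrow> (real^'n \<Rightarrow> real) \<Rightarrow> (real \<Rightarrow> real)
                    \<Rightarrow> (real^'n \<Rightarrow> real) \<Rightarrow> real" where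
  "Jfun s1 s2 V g u =
     enn2real (gag2 s1 u) / 2 + enn2real (gag2 s2 u) / 2
     + (\<integral>x. V x * (u x)\<^sup>2 \<partial>lborel) / 2
     - (\<integral>x. Gprim g (u x) \<partial>lborel)"

text \<open>The Pohozaev functional P; gradV is the (a.e.) gradient of V.\<close>
definition Pfun :: "real \<Rightarrow> real \<Rightarrow> (real^'n \<Rightarrow> real^'n) \<Rightarrow> (real \<Rightarrow> real)
                    \<Rightarrow> (real^'n \<Rightarrow> real) \<Rightarrow> real" where
  "Pfun s1 s2 gradV g u =
     s1 * enn2real (gag2 s1 u) + s2 * enn2real (gag2 s2 u)
     - (\<integral>x. (gradV x \<bullet> x) * (u x)\<^sup>2 \<partial>lborel) / 2
     - real CARD('n) * (\<integral>x. Gtil g (u x) \<partial>lborel)"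

definition Pa :: "real \<Rightarrow> real \<Rightarrow> real \<Rightarrow> (real^'n \<Rightarrow> real^'n) \<Rightarrow> (real \<Rightarrow> real)
                  \<Rightarrow> (real^'n \<Rightarrow> real) set" where
  "Pa s1 s2 a gradV g = {u \<in> Sa s1 s2 a. Pfun s1 s2 gradV g u = 0}"

end

theory Submission
  imports Defs
begin

text \<open>Write \<open>S(u)\<close> for the sum of the two squared Gagliardo seminorms. On the Pohozaev
  manifold, \<open>P(u) = 0\<close> and the bound on \<open>\<integral> W u\<^sup>2\<close> give \<open>d \<integral> G\<^sup>~(u) \<le> (s\<^sub>2 + \<sigma>\<^sub>2) S(u)\<close>,
  while \<open>\<alpha> G \<le> g(t) t\<close> gives \<open>G \<le> 2 G\<^sup>~ / (\<alpha> - 2)\<close>. With the bound on \<open>\<integral> V u\<^sup>2\<close> this yields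
  \<open>J(u) \<ge> k S(u)\<close> for \<open>k = (1 - \<sigma>\<^sub>1)/2 - 2 (s\<^sub>2 + \<sigma>\<^sub>2) / (d (\<alpha> - 2))\<close>, and \<open>k > 0\<close> is exactly
  the second upper bound on \<open>\<sigma>\<^sub>2\<close> in \<open>(V\<^sub>2)\<close>. No other hypothesis is needed, except that
  \<open>(G\<^sub>3)\<close> makes \<open>G\<^sup>~\<close> continuous, so that \<open>G\<^sup>~ \<circ> u\<close> is measurable.\<close>

lemma coercive_if_linear_lower_bound:
  fixes f N :: "'a \<Rightarrow> real"
  assumes "k > 0" and "\<And>u. u \<in> A \<Longrightarrow> f u \<ge> k * N u"
  shows "\<forall>M. \<exists>R. \<forall>u \<in> A. N u \<ge> R \<longrightarrow> f u \<ge> M"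
proof (intro allI exI ballI impI)
  fix M u assume "u \<in> A" "N u \<ge> M / k"
  then have "M \<le> k * N u" using \<open>k > 0\<close> by (simp add: field_simps)
  then show "f u \<ge> M" using assms(2)[OF \<open>u \<in> A\<close>] by linarith
qed

text \<open>The bound \<open>h \<le> C f\<close> only serves to make \<open>h\<close> integrable whenever \<open>f\<close> is; if \<open>f\<close> is
  not integrable, its Bochner integral is \<open>0\<close>.\<close>

lemma integral_le_scaled_integral:
  fixes f h :: "'a \<Rightarrow> real"
  assumes "h \<in> borel_measurable M" and "c \<ge> 0"
    and "\<And>x. 0 \<le> h x" and "\<And>x. f x \<le> c * h x" and "\<And>x. h x \<le> C * f x"
  shows "(\<integral>x. f x \<partial>M) \<le> c * (\<integral>x. h x \<partial>M)"
proof (cases "integrable M f")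
  case True
  have "integrable M (\<lambda>x. C * f x)" using True by simp
  moreover have "AE x in M. norm (h x) \<le> norm (C * f x)"
    using assms(3,5) by (intro AE_I2) (smt (verit) real_norm_def)
  ultimately have "integrable M h" by (rule Bochner_Integration.integrable_bound[OF _ assms(1)])
  then have "(\<integral>x. f x \<partial>M) \<le> (\<integral>x. c * h x \<partial>M)"
    using True assms(4) by (intro integral_mono) auto
  then show ?thesis by simp
next
  case False
  then have "(\<integral>x. f x \<partial>M) = 0" by (rule not_integrable_integral_eq)
  moreover have "(\<integral>x. h x \<partial>M) \<ge> 0" using assms(3) by (simp add: integral_nonneg_AE)
  ultimately show ?thesis using \<open>c \<ge> 0\<close> by simp
qed

lemma Gprim_nonneg:
  assumes "\<alpha> < \<beta>" "\<alpha> * Gprim g t \<le> g t * t" "g t * t \<le> \<beta> * Gprim g t"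
  shows "Gprim g t \<ge> 0"
proof -
  have "(\<beta> - \<alpha>) * Gprim g t \<ge> 0" using assms(2,3) by (simp add: algebra_simps)
  then show ?thesis using \<open>\<alpha> < \<beta>\<close> by (simp add: zero_le_mult_iff)
qed

lemma Gprim_le_Gtil:
  assumes "2 < \<alpha>" "\<alpha> * Gprim g t \<le> g t * t"
  shows "Gprim g t \<le> 2 / (\<alpha> - 2) * Gtil g t"
proof -
  have "(\<alpha> - 2) * Gprim g t \<le> 2 * Gtil g t" using assms(2) unfolding Gtil_def by (simp add: algebra_simps)
  then show ?thesis using \<open>2 < \<alpha>\<close> by (simp add: field_simps)
qed

lemma Gtil_le_Gprim:
  assumes "g t * t \<le> \<beta> * Gprim g t"
  shows "Gtil g t \<le> (\<beta> / 2 - 1) * Gprim g t"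
  using assms unfolding Gtil_def by (simp add: algebra_simps)

lemma Gtil_nonneg:
  assumes "2 < \<alpha>" "\<alpha> < \<beta>" "\<alpha> * Gprim g t \<le> g t * t" "g t * t \<le> \<beta> * Gprim g t"
  shows "Gtil g t \<ge> 0"
proof -
  have "0 \<le> Gprim g t" using Gprim_nonneg assms(2-4) .
  also have "\<dots> \<le> 2 / (\<alpha> - 2) * Gtil g t" using Gprim_le_Gtil assms(1,3) .
  finally show ?thesis using \<open>2 < \<alpha>\<close> by (simp add: zero_le_divide_iff)
qed

lemma integral_Gprim_le_integral_Gtil:
  assumes "2 < \<alpha>" "\<alpha> < \<beta>"
    and "\<And>t. \<alpha> * Gprim g t \<le> g t * t" "\<And>t. g t * t \<le> \<beta> * Gprim g t"
    and "continuous_on UNIV (Gtil g)" "u \<in> borel_measurable M"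
  shows "(\<integral>x. Gprim g (u x) \<partial>M) \<le> 2 / (\<alpha> - 2) * (\<integral>x. Gtil g (u x) \<partial>M)"
proof (rule integral_le_scaled_integral[where C = "\<beta> / 2 - 1"])
  show "(\<lambda>x. Gtil g (u x)) \<in> borel_measurable M"
    using borel_measurable_continuous_on[OF assms(5,6)] by simp
qed (use assms Gtil_nonneg Gprim_le_Gtil Gtil_le_Gprim in auto)

lemma Pfun_zero_imp_integral_Gtil_bound:
  fixes u :: "real^'n \<Rightarrow> real"
  assumes "Pfun s1 s2 gradV g u = 0" "0 \<le> s1" "s1 \<le> s2"
    and "\<bar>\<integral>x. (gradV x \<bullet> x) / 2 * (u x)\<^sup>2 \<partial>lborel\<bar>
           \<le> \<sigma>2 * (enn2real (gag2 s1 u) + enn2real (gag2 s2 u))"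
  shows "real CARD('n) * (\<integral>x. Gtil g (u x) \<partial>lborel)
           \<le> (s2 + \<sigma>2) * (enn2real (gag2 s1 u) + enn2real (gag2 s2 u))"
proof -
  have "(\<integral>x. (gradV x \<bullet> x) / 2 * (u x)\<^sup>2 \<partial>lborel) = (\<integral>x. (gradV x \<bullet> x) * (u x)\<^sup>2 \<partial>lborel) / 2"
    by (simp add: field_simps)
  moreover have "s1 * enn2real (gag2 s1 u) \<le> s2 * enn2real (gag2 s1 u)"
    using \<open>s1 \<le> s2\<close> by (simp add: mult_right_mono)
  ultimately show ?thesis
    using assms(1,4) unfolding Pfun_def by (simp add: algebra_simps abs_le_iff)
qed

lemma Jfun_lower_bound:
  fixes u :: "real^'n \<Rightarrow> real"
  assumes "\<bar>\<integral>x. V x * (u x)\<^sup>2 \<partial>lborel\<bar> \<le> \<sigma>1 * (enn2real (gag2 s1 u) + enn2real (gag2 s2 u))"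
    and "(\<integral>x. Gprim g (u x) \<partial>lborel) \<le> c * (enn2real (gag2 s1 u) + enn2real (gag2 s2 u))"
  shows "Jfun s1 s2 V g u \<ge> ((1 - \<sigma>1) / 2 - c) * (enn2real (gag2 s1 u) + enn2real (gag2 s2 u))"
  using assms unfolding Jfun_def abs_le_iff by (simp add: field_simps)

theorem corollary4p2:
  fixes s1 s2 a \<alpha> \<beta> \<sigma>1 \<sigma>2 \<sigma>3 :: real
    and V :: "real^'n \<Rightarrow> real"
    and gradV gradW :: "real^'n \<Rightarrow> real^'n"
    and g :: "real \<Rightarrow> real"
  defines "d \<equiv> real CARD('n)"
  defines "W \<equiv> (\<lambda>x. (gradV x \<bullet> x) / 2)"
  defines "Y \<equiv> (\<lambda>x. (d * \<alpha> / 2 - d - 1) * W x + gradW x \<bullet> x)"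
  assumes s: "0 < s1" "s1 < s2" "s2 < 1"
    and dim: "2 * s1 < d" "d < 2 * s1 * s2 / (s2 - s1)"
    and a: "a > 0"
    \<comment> \<open>(G1)\<close>
    and G1: "continuous_on UNIV g" "\<And>t. g (- t) = - g t"
    \<comment> \<open>(G2)\<close>
    and G2: "2 + 4 * s2 / d < \<alpha>" "\<alpha> < \<beta>" "\<beta> < 2 * d / (d - 2 * s1)"
      "\<And>t. \<alpha> * Gprim g t \<le> g t * t" "\<And>t. g t * t \<le> \<beta> * Gprim g t"
    \<comment> \<open>(G3)\<close>
    and G3: "\<And>t. \<exists>D. (Gtil g has_real_derivative D) (at t) \<and> D * t \<ge> \<alpha> * Gtil g t"
    \<comment> \<open>(V1)\<close>
    and V1: "(V \<longlongrightarrow> 0) at_infinity" "bdd_above (range V)" "(SUP x. V x) = 0"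
      "0 \<le> \<sigma>1" "\<sigma>1 \<le> (d * (\<alpha> - 2) - 4) / (d * (\<alpha> - 2))"
      "\<And>u. u \<in> Hs s1 s2 \<Longrightarrow> integrable lborel (\<lambda>x. V x * (u x)\<^sup>2) \<and>
          \<bar>\<integral>x. V x * (u x)\<^sup>2 \<partial>lborel\<bar>
            \<le> \<sigma>1 * (enn2real (gag2 s1 u) + enn2real (gag2 s2 u))"
    \<comment> \<open>(V2)\<close>
    and V2: "AE x in lborel. (V has_derivative (\<lambda>h. gradV x \<bullet> h)) (at x)"
      "(W \<longlongrightarrow> 0) at_infinity"
      "0 < \<sigma>2" "\<sigma>2 < s1 - (\<beta> - 2) * d / (2 * \<beta>)"
      "\<sigma>2 < d * (\<alpha> - 2) * (1 - \<sigma>1) / 4 - s2"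
      "\<And>u. u \<in> Hs s1 s2 \<Longrightarrow> integrable lborel (\<lambda>x. W x * (u x)\<^sup>2) \<and>
          \<bar>\<integral>x. W x * (u x)\<^sup>2 \<partial>lborel\<bar>
            \<le> \<sigma>2 * (enn2real (gag2 s1 u) + enn2real (gag2 s2 u))"
    \<comment> \<open>(V3)\<close>
    and V3: "AE x in lborel. (W has_derivative (\<lambda>h. gradW x \<bullet> h)) (at x)"
      "0 \<le> \<sigma>3" "\<sigma>3 \<le> s1\<^sup>2 * (d * \<alpha> / 2 - d - 2 * s2)"
      "\<And>u. u \<in> Hs s1 s2 \<Longrightarrow> integrable lborel (\<lambda>x. Y x * (u x)\<^sup>2) \<and>
          \<bar>\<integral>x. Y x * (u x)\<^sup>2 \<partial>lborel\<bar>
            \<le> \<sigma>3 * (enn2real (gag2 s1 u) + enn2real (gag2 s2 u))"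
  shows "\<forall>M. \<exists>R. \<forall>u \<in> Pa s1 s2 a gradV g.
           enn2real (gag2 s1 u) + enn2real (gag2 s2 u) \<ge> R \<longrightarrow> Jfun s1 s2 V g u \<ge> M"
proof -
  have "d > 0" using dim s by linarith
  have "4 * s2 / d > 0" using s \<open>d > 0\<close> by simp
  then have "\<alpha> > 2" using G2(1) by linarith
  have "continuous_on UNIV (Gtil g)"
    using G3 by (meson DERIV_isCont continuous_at_imp_continuous_on)
  define k where "k = (1 - \<sigma>1) / 2 - 2 / (\<alpha> - 2) * ((s2 + \<sigma>2) / d)"
  have "k > 0"
  proof -
    have "2 / (\<alpha> - 2) * ((s2 + \<sigma>2) / d) < (1 - \<sigma>1) / 2"
      using V2(5) \<open>d > 0\<close> \<open>\<alpha> > 2\<close> by (simp add: field_simps)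
    then show ?thesis unfolding k_def by linarith
  qed
  show ?thesis
  proof (rule coercive_if_linear_lower_bound[OF \<open>k > 0\<close>])
    fix u assume "u \<in> Pa s1 s2 a gradV g"
    then have "u \<in> Hs s1 s2" and P0: "Pfun s1 s2 gradV g u = 0"
      unfolding Pa_def Sa_def by auto
    then have "u \<in> borel_measurable lborel" unfolding Hs_def by auto
    let ?S = "enn2real (gag2 s1 u) + enn2real (gag2 s2 u)"
    have "(\<integral>x. Gtil g (u x) \<partial>lborel) \<le> (s2 + \<sigma>2) / d * ?S"
      using Pfun_zero_imp_integral_Gtil_bound[OF P0, of \<sigma>2] V2(6)[OF \<open>u \<in> Hs s1 s2\<close>]
        s \<open>d > 0\<close> unfolding W_def d_def by (simp add: field_simps)
    then have "2 / (\<alpha> - 2) * (\<integral>x. Gtil g (u x) \<partial>lborel) \<le> 2 / (\<alpha> - 2) * ((s2 + \<sigma>2) / d * ?S)"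
      using \<open>\<alpha> > 2\<close> by (intro mult_left_mono) auto
    with integral_Gprim_le_integral_Gtil[OF \<open>\<alpha> > 2\<close> G2(2,4,5)
        \<open>continuous_on UNIV (Gtil g)\<close> \<open>u \<in> borel_measurable lborel\<close>]
    have "(\<integral>x. Gprim g (u x) \<partial>lborel) \<le> 2 / (\<alpha> - 2) * ((s2 + \<sigma>2) / d) * ?S"
      by (simp only: mult.assoc)
    then show "Jfun s1 s2 V g u \<ge> k * ?S"
      using Jfun_lower_bound V1(6)[OF \<open>u \<in> Hs s1 s2\<close>] unfolding k_def by blast
  qed
qed

end
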